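(* If $P$ is an interval order, then the set $\mathcal{J}^{\neg\downarrow}(P)$ of non-principal ideals of $P$ is a chain under inclusion.
   Context: A poset $P$ is an interval order if it is isomorphic to a set of nonempty intervals of some chain $C$, ordered by $I<J$ iff $x<y$ for every $x\in I$ and every $y\in J$. An ideal of $P$ is a nonempty initial segment of $P$ (closed downward) which is up-directed (any two elements have an upper bound in it); it is principal if it has a largest element. *)

theory Defs
  imports Main
begin

definition poset_on :: "'a set \<Rightarrow> ('a \<Rightarrow> 'a \<Rightarrow> bool) \<Rightarrow> bool" where
  "poset_on P le \<longleftrightarrow>
     (\<forall>x\<in>P. le x x) \<and>
     (\<forall>x\<in>P. \<forall>y\<in>P. le x y \<and> le y x \<longrightarrow> x = y) \<and>
     (\<forall>x\<in>P. \<forall>y\<in>P. \<forall>z\<in>P. le x y \<and> le y z \<longrightarrow> le x z)"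

definition chain_on :: "'c set \<Rightarrow> ('c \<Rightarrow> 'c \<Rightarrow> bool) \<Rightarrow> bool" where
  "chain_on C leC \<longleftrightarrow> poset_on C leC \<and> (\<forall>x\<in>C. \<forall>y\<in>C. leC x y \<or> leC y x)"

definition interval_of :: "'c set \<Rightarrow> ('c \<Rightarrow> 'c \<Rightarrow> bool) \<Rightarrow> 'c set \<Rightarrow> bool" where
  "interval_of C leC I \<longleftrightarrow> I \<noteq> {} \<and> I \<subseteq> C \<and>
     (\<forall>x\<in>I. \<forall>y\<in>I. \<forall>z\<in>C. leC x z \<and> leC z y \<longrightarrow> z \<in> I)"

text \<open>P is an interval order: isomorphic (via f) to a set of nonempty intervals of some chain C,
  ordered by I < J iff x < y for all x in I and y in J.  The chain lives in an arbitrary type 'c.\<close>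
definition interval_rep :: "'a set \<Rightarrow> ('a \<Rightarrow> 'a \<Rightarrow> bool) \<Rightarrow> 'c set \<Rightarrow> ('c \<Rightarrow> 'c \<Rightarrow> bool)
     \<Rightarrow> ('a \<Rightarrow> 'c set) \<Rightarrow> bool" where
  "interval_rep P le C leC f \<longleftrightarrow>
     chain_on C leC \<and> inj_on f P \<and> (\<forall>a\<in>P. interval_of C leC (f a)) \<and>
     (\<forall>a\<in>P. \<forall>b\<in>P. (le a b \<and> a \<noteq> b) \<longleftrightarrow>
        (\<forall>x\<in>f a. \<forall>y\<in>f b. leC x y \<and> x \<noteq> y))"

definition ideal_of :: "'a set \<Rightarrow> ('a \<Rightarrow> 'a \<Rightarrow> bool) \<Rightarrow> 'a set \<Rightarrow> bool" where
  "ideal_of P le I \<longleftrightarrow> I \<noteq> {} \<and> I \<subseteq> P \<and>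
     (\<forall>x\<in>I. \<forall>y\<in>P. le y x \<longrightarrow> y \<in> I) \<and>
     (\<forall>x\<in>I. \<forall>y\<in>I. \<exists>z\<in>I. le x z \<and> le y z)"

definition principal :: "('a \<Rightarrow> 'a \<Rightarrow> bool) \<Rightarrow> 'a set \<Rightarrow> bool" where
  "principal le I \<longleftrightarrow> (\<exists>m\<in>I. \<forall>x\<in>I. le x m)"

definition nonprincipal_ideals :: "'a set \<Rightarrow> ('a \<Rightarrow> 'a \<Rightarrow> bool) \<Rightarrow> 'a set set" where
  "nonprincipal_ideals P le = {I. ideal_of P le I \<and> \<not> principal le I}"

end

theory Submission
  imports Defs
begin

text \<open>An interval order contains no two strict chains \<open>a < z\<close>, \<open>b < w\<close> with \<open>a\<close>
  incomparable to \<open>w\<close> and \<open>b\<close> incomparable to \<open>z\<close>: their intervals would give points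
  \<open>q \<le> p < s \<le> r < q\<close> of the chain. In a non-principal ideal every element lies strictly
  below another one, so if \<open>a \<in> I - J\<close> and \<open>b \<in> J - I\<close>, lifting \<open>a\<close> to \<open>z\<close> in \<open>I\<close> and
  \<open>b\<close> to \<open>w\<close> in \<open>J\<close> produces such a forbidden pattern, since \<open>a \<le> w\<close> would put \<open>a\<close>
  into \<open>J\<close> and \<open>b \<le> z\<close> would put \<open>b\<close> into \<open>I\<close>.\<close>

definition two_plus_two_free :: "'a set \<Rightarrow> ('a \<Rightarrow> 'a \<Rightarrow> bool) \<Rightarrow> bool" where
  "two_plus_two_free P le \<longleftrightarrow>
     (\<forall>a\<in>P. \<forall>z\<in>P. \<forall>b\<in>P. \<forall>w\<in>P.
        le a z \<and> a \<noteq> z \<and> le b w \<and> b \<noteq> w \<longrightarrow> le a w \<or> le b z)"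

lemma chain_on_not_less_imp_le:
  assumes "chain_on C leC" "x \<in> C" "y \<in> C" "\<not> (leC x y \<and> x \<noteq> y)"
  shows "leC y x"
  using assms unfolding chain_on_def poset_on_def by metis

lemma chain_on_no_cycle:
  assumes "chain_on C leC" "q \<in> C" "p \<in> C" "s \<in> C" "r \<in> C"
    and "leC q p" "leC p s" "leC s r" "leC r q" "r \<noteq> q"
  shows False
proof -
  have "leC q r"
    using assms(1-9) unfolding chain_on_def poset_on_def by meson
  then show False
    using assms unfolding chain_on_def poset_on_def by blast
qed

lemma interval_rep_two_plus_two_free:
  assumes rep: "interval_rep P le C leC f"
  shows "two_plus_two_free P le"
  unfolding two_plus_two_free_def
proof (intro ballI impI, rule ccontr)
  fix a z b w
  assume P: "a \<in> P" "z \<in> P" "b \<in> P" "w \<in> P"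
    and less: "le a z \<and> a \<noteq> z \<and> le b w \<and> b \<noteq> w"
    and incomparable: "\<not> (le a w \<or> le b z)"
  have chain: "chain_on C leC"
    and in_C: "\<And>x. x \<in> P \<Longrightarrow> f x \<subseteq> C"
    and less_iff: "\<And>x y. x \<in> P \<Longrightarrow> y \<in> P \<Longrightarrow>
        (le x y \<and> x \<noteq> y) \<longleftrightarrow> (\<forall>u\<in>f x. \<forall>v\<in>f y. leC u v \<and> u \<noteq> v)"
    using rep unfolding interval_rep_def interval_of_def by auto
  obtain p q where pq: "p \<in> f a" "q \<in> f w" "\<not> (leC p q \<and> p \<noteq> q)"
    using less_iff[OF P(1,4)] incomparable by blast
  obtain r s where rs: "r \<in> f b" "s \<in> f z" "\<not> (leC r s \<and> r \<noteq> s)"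
    using less_iff[OF P(3,2)] incomparable by blast
  have "leC p s" and "leC r q" "r \<noteq> q"
    using less_iff[OF P(1,2)] less_iff[OF P(3,4)] less pq rs by auto
  moreover have "p \<in> C" "q \<in> C" "r \<in> C" "s \<in> C"
    using in_C P pq rs by auto
  moreover have "leC q p" "leC s r"
    using chain_on_not_less_imp_le[OF chain] pq rs calculation by blast+
  ultimately show False
    using chain_on_no_cycle[OF chain] by blast
qed

lemma nonprincipal_ideal_has_strict_upper:
  assumes "ideal_of P le I" "\<not> principal le I" "a \<in> I"
  shows "\<exists>z\<in>I. le a z \<and> a \<noteq> z"
proof -
  obtain x where "x \<in> I" "\<not> le x a"
    using assms(2,3) unfolding principal_def by blast
  moreover obtain z where "z \<in> I" "le a z" "le x z"
    using assms(1,3) \<open>x \<in> I\<close> unfolding ideal_of_def by blast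
  ultimately show ?thesis by blast
qed

lemma two_plus_two_free_nonprincipal_ideals_comparable:
  assumes "two_plus_two_free P le"
    and I: "ideal_of P le I" "\<not> principal le I"
    and J: "ideal_of P le J" "\<not> principal le J"
  shows "I \<subseteq> J \<or> J \<subseteq> I"
proof (rule ccontr)
  assume "\<not> (I \<subseteq> J \<or> J \<subseteq> I)"
  then obtain a b where ab: "a \<in> I" "a \<notin> J" "b \<in> J" "b \<notin> I"
    by blast
  obtain z where z: "z \<in> I" "le a z" "a \<noteq> z"
    using nonprincipal_ideal_has_strict_upper[OF I ab(1)] by blast
  obtain w where w: "w \<in> J" "le b w" "b \<noteq> w"
    using nonprincipal_ideal_has_strict_upper[OF J ab(3)] by blast
  have "I \<subseteq> P" "J \<subseteq> P"
    using I(1) J(1) unfolding ideal_of_def by simp_all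
  then have "le a w \<or> le b z"
    using assms(1) ab z w unfolding two_plus_two_free_def by blast
  then show False
    using I(1) J(1) ab z w \<open>I \<subseteq> P\<close> \<open>J \<subseteq> P\<close> unfolding ideal_of_def by blast
qed

theorem lemma1p4:
  fixes P :: "'a set" and le :: "'a \<Rightarrow> 'a \<Rightarrow> bool"
    and C :: "'c set" and leC :: "'c \<Rightarrow> 'c \<Rightarrow> bool" and f :: "'a \<Rightarrow> 'c set"
  assumes "poset_on P le"
    and "interval_rep P le C leC f"
  shows "\<forall>I\<in>nonprincipal_ideals P le. \<forall>J\<in>nonprincipal_ideals P le. I \<subseteq> J \<or> J \<subseteq> I"
  using two_plus_two_free_nonprincipal_ideals_comparable
    [OF interval_rep_two_plus_two_free[OF assms(2)]]
  unfolding nonprincipal_ideals_def by blast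

end
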